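(* Assume (A1)–(A3) and let $\{\lambda^k\}$ be generated by SLPMM with any $\sigma,\alpha>0$. Fix $z\in\Phi$ and a constant $c>0$. Let $Z_0:=0$, $Z_t:=\sum_{k=0}^{t-1}\langle\lambda^k,G(z,\xi^k)\rangle$ for $t\ge1$, and $Y_t:=\|\lambda^t\|-c/\nu_g$ for $t\ge0$. Then for every $\gamma>0$ and every $t\ge1$, $$\Pr[Z_t\ge\gamma]\le e^{-\gamma^2/(2tc^2)}+\sum_{j=0}^{t-1}\Pr[Y_j>0].$$
   Context: Let $\mathcal C\subset\mathbb R^n$ be a nonempty compact convex set. Let $\xi$ be a random vector whose distribution is supported on $\Xi\subseteq\mathbb R^q$, and let $F:\mathcal C\times\Xi\to\mathbb R$ and $G_i:\mathcal C\times\Xi\to\mathbb R$ ($i=1,\dots,p$) be such that $F(\cdot,\xi)$, $G_i(\cdot,\xi)$ are convex and continuous on $\mathcal C$ for every $\xi$, and $f(x):=\mathbb E[F(x,\xi)]$, $g_i(x):=\mathbb E[G_i(x,\xi)]$ are finite on $\mathcal C$. Write $G=(G_1,\dots,G_p)^T$. The feasible set is $\Phi:=\{x\in\mathcal C: g_i(x)\le0,\ i=1,\dots,p\}$. Stochastic subgradients: $v_0(x,\xi)\in\partial_xF(x,\xi)$, $v_i(x,\xi)\in\partial_xG_i(x,\xi)$. $[t]_+=\max\{t,0\}$, $[t]_+^2=(\max\{t,0\})^2$. SLPMM: fix $\sigma,\alpha>0$, $x^0\in\mathcal C$, $\lambda^0=0\in\mathbb R^p$, i.i.d. copies $\xi^0,\xi^1,\dots$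 of $\xi$. For $k\ge0$, $x^{k+1}=\arg\min_{x\in\mathcal C}\{\mathcal L^k_\sigma(x,\lambda^k)+\frac{\alpha}{2}\|x-x^k\|^2\}$ with $\mathcal L^k_\sigma(x,\lambda):=F(x^k,\xi^k)+\langle v_0(x^k,\xi^k),x-x^k\rangle+\frac{1}{2\sigma}[\sum_{i=1}^p[\lambda_i+\sigma(G_i(x^k,\xi^k)+\langle v_i(x^k,\xi^k),x-x^k\rangle)]_+^2-\|\lambda\|^2]$, and $\lambda_i^{k+1}=[\lambda_i^k+\sigma(G_i(x^k,\xi^k)+\langle v_i(x^k,\xi^k),x^{k+1}-x^k\rangle)]_+$. Assumptions: (A1) $\|x'-x''\|\le R$ on $\mathcal C$. (A2) $\|G(x,\xi)\|\le\nu_g$ for all $x\in\mathcal C,\xi\in\Xi$. (A3) $\|v_0(x,\xi)\|\le\kappa_f$, $\|v_i(x,\xi)\|\le\kappa_g$ for all $x,\xi$. *)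

theory Defs
  imports "HOL-Probability.Probability"
begin

definition subgrad_on :: "'a::real_inner set \<Rightarrow> ('a \<Rightarrow> real) \<Rightarrow> 'a \<Rightarrow> 'a \<Rightarrow> bool" where
  "subgrad_on C f x v \<longleftrightarrow> (\<forall>y\<in>C. f x + inner v (y - x) \<le> f y)"

definition slpmm_L ::
  "('a::euclidean_space \<Rightarrow> 'b \<Rightarrow> real) \<Rightarrow> ('a \<Rightarrow> 'b \<Rightarrow> real^'p) \<Rightarrow> ('a \<Rightarrow> 'b \<Rightarrow> 'a)
   \<Rightarrow> ('p \<Rightarrow> 'a \<Rightarrow> 'b \<Rightarrow> 'a) \<Rightarrow> real \<Rightarrow> 'a \<Rightarrow> 'b \<Rightarrow> 'a \<Rightarrow> real^'p \<Rightarrow> real" where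
  "slpmm_L F G v0 v \<sigma> xk s x lam =
     F xk s + inner (v0 xk s) (x - xk)
     + (1 / (2 * \<sigma>)) * ((\<Sum>i\<in>UNIV. (max (lam $ i + \<sigma> * (G xk s $ i + inner (v i xk s) (x - xk))) 0)\<^sup>2)
                        - (norm lam)\<^sup>2)"

end

theory Submission
  imports Defs
begin

text \<open>The proximal subproblem of SLPMM is strongly convex, so its minimiser is unique and, by a
  closed-graph argument, continuous in the data; hence \<open>\<lambda>\<^sup>k\<close> is a Borel function of
  \<open>\<xi>\<^sup>0, \<dots>, \<xi>\<^sup>k\<^sup>-\<^sup>1\<close>. Replace the increment \<open>\<langle>\<lambda>\<^sup>k, G(z,\<xi>\<^sup>k)\<rangle>\<close> by \<open>0\<close> whenever
  \<open>\<parallel>\<lambda>\<^sup>k\<parallel> > c/\<nu>\<^sub>g\<close>. The truncated increments are bounded by \<open>c\<close> and, as \<open>\<lambda>\<^sup>k \<ge> 0\<close> and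
  \<open>g(z) \<le> 0\<close>, have nonpositive mean given the past, so Hoeffding's lemma applied one sample
  at a time under the product law of the i.i.d. samples gives the Azuma bound for their sum.
  The truncated and the true sum agree unless some \<open>Y\<^sub>j > 0\<close> with \<open>j < t\<close>, which gives the
  union-bound term.\<close>

lemma pos_part_sq_midpoint_le:
  fixes a b :: real
  shows "(max ((a + b) / 2) 0)\<^sup>2 \<le> ((max a 0)\<^sup>2 + (max b 0)\<^sup>2) / 2"
proof -
  have "(max ((a + b) / 2) 0)\<^sup>2 \<le> ((max a 0 + max b 0) / 2)\<^sup>2"
    by (intro power_mono) (auto simp: max_def)
  also have "\<dots> = ((max a 0)\<^sup>2 + (max b 0)\<^sup>2) / 2 - ((max a 0 - max b 0) / 2)\<^sup>2"
    by (simp add: power2_eq_square field_simps)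
  finally show ?thesis
    using zero_le_power2[of "(max a 0 - max b 0) / 2"] by linarith
qed

lemma norm_midpoint_sq:
  fixes a b :: "'a::real_inner"
  shows "(norm ((1/2) *\<^sub>R (a + b)))\<^sup>2 = ((norm a)\<^sup>2 + (norm b)\<^sup>2) / 2 - (norm (a - b))\<^sup>2 / 4"
  by (simp add: power2_norm_eq_inner inner_add inner_diff inner_commute algebra_simps)
     (simp add: field_simps)

lemma strongly_midconvex_arg_min_unique:
  fixes f :: "'a::real_normed_vector \<Rightarrow> real"
  assumes "convex C" "\<alpha> > 0"
    and mid: "\<And>y1 y2. f ((1/2) *\<^sub>R (y1 + y2)) \<le> (f y1 + f y2) / 2 - (\<alpha>/8) * (norm (y1 - y2))\<^sup>2"
    and min1: "is_arg_min f (\<lambda>y. y \<in> C) y1" and min2: "is_arg_min f (\<lambda>y. y \<in> C) y2"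
  shows "y1 = y2"
proof -
  have "y1 \<in> C" "y2 \<in> C"
    using min1 min2 by (auto simp: is_arg_min_def)
  then have "(1/2) *\<^sub>R y1 + (1/2) *\<^sub>R y2 \<in> C"
    using \<open>convex C\<close> by (intro convexD) auto
  then have "f y1 \<le> f ((1/2) *\<^sub>R (y1 + y2))"
    using min1 by (auto simp: is_arg_min_def scaleR_add_right not_less)
  moreover have "f y1 = f y2"
    using min1 min2 \<open>y1 \<in> C\<close> \<open>y2 \<in> C\<close> by (fastforce simp: is_arg_min_def)
  ultimately have "(\<alpha>/8) * (norm (y1 - y2))\<^sup>2 \<le> 0"
    using mid[of y1 y2] by argo
  with \<open>\<alpha> > 0\<close> show ?thesis
    by (simp add: mult_le_0_iff)
qed

lemma continuous_on_unique_arg_min: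
  fixes f :: "'q::euclidean_space \<Rightarrow> 'a::euclidean_space \<Rightarrow> real"
  assumes "compact K"
    and cont: "continuous_on UNIV (\<lambda>z. f (fst z) (snd z))"
    and min: "\<And>q. is_arg_min (f q) (\<lambda>y. y \<in> K) (m q)"
    and unique: "\<And>q y. is_arg_min (f q) (\<lambda>y. y \<in> K) y \<Longrightarrow> y = m q"
  shows "continuous_on UNIV m"
proof (rule continuous_from_closed_graph[OF \<open>compact K\<close>])
  show "m \<in> UNIV \<rightarrow> K"
    using min by (auto simp: is_arg_min_def)
  have graph: "(\<lambda>q. (q, m q)) ` UNIV = (UNIV \<times> K) \<inter> (\<Inter>y\<in>K. {z. f (fst z) (snd z) \<le> f (fst z) y})"
  proof (intro equalityI subsetI)
    fix z assume "z \<in> (UNIV \<times> K) \<inter> (\<Inter>y\<in>K. {z. f (fst z) (snd z) \<le> f (fst z) y})"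
    then have "is_arg_min (f (fst z)) (\<lambda>y. y \<in> K) (snd z)"
      by (force simp: is_arg_min_def)
    then show "z \<in> (\<lambda>q. (q, m q)) ` UNIV"
      using unique by (intro image_eqI[of _ _ "fst z"]) auto
  next
    fix z assume "z \<in> (\<lambda>q. (q, m q)) ` UNIV"
    then obtain q where "z = (q, m q)"
      by blast
    with min[of q] show "z \<in> (UNIV \<times> K) \<inter> (\<Inter>y\<in>K. {z. f (fst z) (snd z) \<le> f (fst z) y})"
      by (auto simp: is_arg_min_def not_less)
  qed
  have cont_fixed: "continuous_on UNIV (\<lambda>z. f (fst z) y)" for y
    by (rule continuous_on_compose2[OF cont, of UNIV "\<lambda>z. (fst z, y)", simplified])
       (intro continuous_intros)
  then show "closed ((\<lambda>q. (q, m q)) ` UNIV)"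
    unfolding graph
    by (intro closed_Int closed_INT ballI closed_Times closed_UNIV compact_imp_closed[OF \<open>compact K\<close>]
        closed_Collect_le cont cont_fixed)
qed

text \<open>The SLPMM subproblem without the constant \<open>F(x\<^sup>k, \<xi>\<^sup>k)\<close>. Its data
  \<open>q = (x\<^sup>k, \<lambda>\<^sup>k, G(x\<^sup>k,\<xi>\<^sup>k), v\<^sub>0(x\<^sup>k,\<xi>\<^sup>k), (v\<^sub>i(x\<^sup>k,\<xi>\<^sup>k))\<^sub>i)\<close> is bundled into one point of a
  Euclidean space, so that the minimiser becomes a continuous, hence Borel, function of it.\<close>

definition prox_objective ::
  "real \<Rightarrow> real \<Rightarrow> 'a::real_inner \<times> (real^'p) \<times> (real^'p) \<times> 'a \<times> ('a^'p) \<Rightarrow> 'a \<Rightarrow> real" where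
  "prox_objective \<sigma> \<alpha> q y = (case q of (p, l, g, w0, W) \<Rightarrow>
     inner w0 (y - p)
     + (1 / (2 * \<sigma>)) * ((\<Sum>i\<in>UNIV. (max (l $ i + \<sigma> * (g $ i + inner (W $ i) (y - p))) 0)\<^sup>2) - (norm l)\<^sup>2)
     + (\<alpha> / 2) * (norm (y - p))\<^sup>2)"

lemma slpmm_L_eq_prox_objective:
  "slpmm_L F G v0 v \<sigma> p s y l + (\<alpha> / 2) * (norm (y - p))\<^sup>2
     = F p s + prox_objective \<sigma> \<alpha> (p, l, G p s, v0 p s, \<chi> i. v i p s) y"
  by (simp add: slpmm_L_def prox_objective_def)

lemma continuous_on_prox_objective:
  "continuous_on UNIV (\<lambda>z. prox_objective \<sigma> \<alpha> (fst z) (snd z))"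
proof -
  have expand: "prox_objective \<sigma> \<alpha> q y =
      inner (fst (snd (snd (snd q)))) (y - fst q)
      + (1 / (2 * \<sigma>)) * ((\<Sum>i\<in>UNIV. (max (fst (snd q) $ i + \<sigma> * (fst (snd (snd q)) $ i
           + inner (snd (snd (snd (snd q))) $ i) (y - fst q))) 0)\<^sup>2) - (norm (fst (snd q)))\<^sup>2)
      + (\<alpha> / 2) * (norm (y - fst q))\<^sup>2" for q y
    by (cases q) (simp add: prox_objective_def)
  show ?thesis
    unfolding expand by (intro continuous_intros)
qed

lemma prox_objective_midpoint_le:
  assumes "\<sigma> > 0"
  shows "prox_objective \<sigma> \<alpha> q ((1/2) *\<^sub>R (y1 + y2))
    \<le> (prox_objective \<sigma> \<alpha> q y1 + prox_objective \<sigma> \<alpha> q y2) / 2 - (\<alpha>/8) * (norm (y1 - y2))\<^sup>2"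
proof -
  obtain p l g w0 W where q: "q = (p, l, g, w0, W)"
    by (cases q) auto
  define m where "m = (1/2) *\<^sub>R (y1 + y2)"
  define u where "u y i = l $ i + \<sigma> * (g $ i + inner (W $ i) (y - p))" for y i
  define P where "P y = (\<Sum>i\<in>UNIV. (max (u y i) 0)\<^sup>2)" for y
  have obj: "prox_objective \<sigma> \<alpha> q y = inner w0 (y - p) + P y / (2 * \<sigma>) - (norm l)\<^sup>2 / (2 * \<sigma>)
      + (\<alpha> / 2) * (norm (y - p))\<^sup>2" for y
    by (simp add: prox_objective_def q P_def u_def diff_divide_distrib)
  have "u m i = (u y1 i + u y2 i) / 2" for i
    by (simp add: m_def u_def inner_diff_right inner_add_right algebra_simps)
  then have "P m \<le> (\<Sum>i\<in>UNIV. ((max (u y1 i) 0)\<^sup>2 + (max (u y2 i) 0)\<^sup>2) / 2)"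
    unfolding P_def by (intro sum_mono) (simp only: pos_part_sq_midpoint_le)
  also have "\<dots> = (P y1 + P y2) / 2"
    by (simp add: P_def sum.distrib flip: sum_divide_distrib)
  finally have "P m / (2 * \<sigma>) \<le> ((P y1 + P y2) / 2) / (2 * \<sigma>)"
    using assms by (intro divide_right_mono) auto
  also have "\<dots> = (P y1 / (2 * \<sigma>) + P y2 / (2 * \<sigma>)) / 2"
    using assms by (simp add: field_simps)
  finally have penalty: "P m / (2 * \<sigma>) \<le> (P y1 / (2 * \<sigma>) + P y2 / (2 * \<sigma>)) / 2" .
  have linear: "inner w0 (m - p) = (inner w0 (y1 - p) + inner w0 (y2 - p)) / 2"
    by (simp add: m_def inner_diff_right inner_add_right algebra_simps)
  have proximal: "(\<alpha> / 2) * (norm (m - p))\<^sup>2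
      = ((\<alpha> / 2) * (norm (y1 - p))\<^sup>2 + (\<alpha> / 2) * (norm (y2 - p))\<^sup>2) / 2 - (\<alpha>/8) * (norm (y1 - y2))\<^sup>2"
  proof -
    have "(1/2) *\<^sub>R ((y1 - p) + (y2 - p)) = (1/2) *\<^sub>R (y1 + y2) - (1/2) *\<^sub>R (p + p)"
      by (simp add: algebra_simps)
    then have "m - p = (1/2) *\<^sub>R ((y1 - p) + (y2 - p))"
      by (simp add: m_def scaleR_half_double)
    then have norm_m: "(norm (m - p))\<^sup>2 = ((norm (y1 - p))\<^sup>2 + (norm (y2 - p))\<^sup>2) / 2 - (norm (y1 - y2))\<^sup>2 / 4"
      using norm_midpoint_sq[of "y1 - p" "y2 - p"] by simp
    show ?thesis
      unfolding norm_m by (simp add: algebra_simps)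
  qed
  show ?thesis
    unfolding obj m_def[symmetric] using penalty linear proximal by argo
qed

lemma borel_measurable_vec_nth [measurable (raw)]:
  fixes f :: "'x \<Rightarrow> 'c::real_normed_vector ^ 'n"
  assumes "f \<in> borel_measurable M"
  shows "(\<lambda>x. f x $ i) \<in> borel_measurable M"
proof -
  have "continuous_on UNIV (\<lambda>x::'c^'n. x $ i)"
    by (intro linear_continuous_on bounded_linear_vec_nth)
  from measurable_compose[OF assms borel_measurable_continuous_onI[OF this]] show ?thesis .
qed

lemma borel_measurable_vec_componentwise:
  fixes f :: "'x \<Rightarrow> 'c::euclidean_space ^ 'n"
  assumes "\<And>i. (\<lambda>x. f x $ i) \<in> borel_measurable M"
  shows "f \<in> borel_measurable M"
  unfolding borel_measurable_euclidean_space[where f=f]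
proof
  fix b :: "'c^'n" assume "b \<in> Basis"
  then obtain i u where "b = axis i u" "u \<in> Basis"
    by (auto simp: Basis_vec_def)
  moreover have "(\<lambda>x. (f x $ i) \<bullet> u) \<in> borel_measurable M"
    using assms[of i] by measurable
  ultimately show "(\<lambda>x. f x \<bullet> b) \<in> borel_measurable M"
    by (simp add: inner_axis)
qed

lemma borel_measurable_uncurried_compose:
  fixes a :: "'x \<Rightarrow> 'c::second_countable_topology" and b :: "'x \<Rightarrow> 'd::second_countable_topology"
  assumes "(\<lambda>p. H (fst p) (snd p)) \<in> borel_measurable borel"
    and "a \<in> borel_measurable M" "b \<in> borel_measurable M"
  shows "(\<lambda>x. H (a x) (b x)) \<in> borel_measurable M"
  using measurable_compose[OF borel_measurable_Pair[OF assms(2,3)] assms(1)] by simp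

locale slpmm =
  fixes \<sigma> \<alpha> :: real and C :: "'a::euclidean_space set"
    and G :: "'a \<Rightarrow> 'b::euclidean_space \<Rightarrow> real^'p"
    and v0 :: "'a \<Rightarrow> 'b \<Rightarrow> 'a" and v :: "'p \<Rightarrow> 'a \<Rightarrow> 'b \<Rightarrow> 'a" and x0 :: 'a
  assumes params: "\<sigma> > 0" "\<alpha> > 0"
    and C: "convex C" "compact C" "C \<noteq> {}"
    and G_meas: "(\<lambda>p. G (fst p) (snd p)) \<in> borel_measurable borel"
    and v0_meas: "(\<lambda>p. v0 (fst p) (snd p)) \<in> borel_measurable borel"
    and v_meas: "\<And>i. (\<lambda>p. v i (fst p) (snd p)) \<in> borel_measurable borel"
begin

definition prox_point :: "'a \<times> (real^'p) \<times> (real^'p) \<times> 'a \<times> ('a^'p) \<Rightarrow> 'a" where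
  "prox_point q = (THE y. is_arg_min (prox_objective \<sigma> \<alpha> q) (\<lambda>y. y \<in> C) y)"

lemma prox_arg_min_unique:
  "is_arg_min (prox_objective \<sigma> \<alpha> q) (\<lambda>y. y \<in> C) y1 \<Longrightarrow>
   is_arg_min (prox_objective \<sigma> \<alpha> q) (\<lambda>y. y \<in> C) y2 \<Longrightarrow> y1 = y2"
  using strongly_midconvex_arg_min_unique[OF C(1) params(2) prox_objective_midpoint_le[OF params(1)]] .

lemma is_arg_min_prox_point: "is_arg_min (prox_objective \<sigma> \<alpha> q) (\<lambda>y. y \<in> C) (prox_point q)"
proof -
  have "continuous_on C (prox_objective \<sigma> \<alpha> q)"
    using continuous_on_compose2[OF continuous_on_prox_objective, of C "\<lambda>y. (q, y)"]
    by (simp add: continuous_on_Pair continuous_on_const continuous_on_id)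
  then obtain y where "y \<in> C" "\<forall>y'\<in>C. prox_objective \<sigma> \<alpha> q y \<le> prox_objective \<sigma> \<alpha> q y'"
    using continuous_attains_inf[OF C(2,3)] by blast
  then have min_y: "is_arg_min (prox_objective \<sigma> \<alpha> q) (\<lambda>y. y \<in> C) y"
    by (auto simp: is_arg_min_def not_less)
  have "prox_point q = y"
    unfolding prox_point_def using min_y prox_arg_min_unique by (intro the_equality) blast+
  with min_y show ?thesis
    by simp
qed

lemma prox_point_eqI: "is_arg_min (prox_objective \<sigma> \<alpha> q) (\<lambda>y. y \<in> C) y \<Longrightarrow> prox_point q = y"
  using prox_arg_min_unique is_arg_min_prox_point by blast

lemma continuous_on_prox_point: "continuous_on UNIV prox_point"
  by (rule continuous_on_unique_arg_min[OF C(2) continuous_on_prox_objective is_arg_min_prox_point])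
     (simp add: prox_point_eqI)

definition slpmm_step :: "'a \<times> (real^'p) \<Rightarrow> 'b \<Rightarrow> 'a \<times> (real^'p)" where
  "slpmm_step st s =
     (let p = fst st; l = snd st; y = prox_point (p, l, G p s, v0 p s, \<chi> i. v i p s)
      in (y, \<chi> i. max (l $ i + \<sigma> * (G p s $ i + inner (v i p s) (y - p))) 0))"

primrec slpmm_iter :: "nat \<Rightarrow> (nat \<Rightarrow> 'b) \<Rightarrow> 'a \<times> (real^'p)" where
  "slpmm_iter 0 s = (x0, 0)"
| "slpmm_iter (Suc k) s = slpmm_step (slpmm_iter k s) (s k)"

lemma slpmm_iter_eq:
  fixes F :: "'a \<Rightarrow> 'b \<Rightarrow> real"
  assumes "xs 0 = x0" "ls 0 = 0"
    and x_step: "\<And>k. is_arg_min (\<lambda>y. slpmm_L F G v0 v \<sigma> (xs k) (s k) y (ls k)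
                       + (\<alpha> / 2) * (norm (y - xs k))\<^sup>2) (\<lambda>y. y \<in> C) (xs (Suc k))"
    and l_step: "\<And>k. ls (Suc k) = (\<chi> i. max (ls k $ i + \<sigma> * (G (xs k) (s k) $ i
                       + inner (v i (xs k) (s k)) (xs (Suc k) - xs k))) 0)"
  shows "slpmm_iter k s = (xs k, ls k)"
proof (induction k)
  case 0
  show ?case using assms(1,2) by simp
next
  case (Suc k)
  have "is_arg_min (prox_objective \<sigma> \<alpha> (xs k, ls k, G (xs k) (s k), v0 (xs k) (s k), \<chi> i. v i (xs k) (s k)))
          (\<lambda>y. y \<in> C) (xs (Suc k))"
    using x_step[of k] unfolding slpmm_L_eq_prox_objective is_arg_min_def by simp
  then show ?case
    using Suc.IH by (simp add: slpmm_step_def Let_def prox_point_eqI l_step)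
qed

lemma slpmm_iter_cong: "(\<And>i. i < k \<Longrightarrow> s i = s' i) \<Longrightarrow> slpmm_iter k s = slpmm_iter k s'"
  by (induction k) auto

lemma slpmm_iter_multiplier_nonneg: "0 \<le> snd (slpmm_iter k s) $ i"
  by (cases k) (auto simp: slpmm_step_def Let_def)

lemma measurable_slpmm_step:
  assumes st: "st \<in> borel_measurable M" and s: "s \<in> borel_measurable M"
  shows "(\<lambda>x. slpmm_step (st x) (s x)) \<in> borel_measurable M"
proof -
  have p: "(\<lambda>x. fst (st x)) \<in> borel_measurable M" and l: "(\<lambda>x. snd (st x)) \<in> borel_measurable M"
    using st by (simp_all add: borel_prod[symmetric])
  have g: "(\<lambda>x. G (fst (st x)) (s x)) \<in> borel_measurable M"
    and w0: "(\<lambda>x. v0 (fst (st x)) (s x)) \<in> borel_measurable M"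
    and w: "\<And>i. (\<lambda>x. v i (fst (st x)) (s x)) \<in> borel_measurable M"
    using G_meas v0_meas v_meas p s by (auto intro: borel_measurable_uncurried_compose)
  have "(\<lambda>x. \<chi> i. v i (fst (st x)) (s x)) \<in> borel_measurable M"
    by (rule borel_measurable_vec_componentwise) (simp add: w)
  then have "(\<lambda>x. (fst (st x), snd (st x), G (fst (st x)) (s x), v0 (fst (st x)) (s x),
      \<chi> i. v i (fst (st x)) (s x))) \<in> borel_measurable M"
    using p l g w0 by (intro borel_measurable_Pair)
  then have y: "(\<lambda>x. prox_point (fst (st x), snd (st x), G (fst (st x)) (s x), v0 (fst (st x)) (s x),
      \<chi> i. v i (fst (st x)) (s x))) \<in> borel_measurable M"
    by (rule measurable_compose[OF _ borel_measurable_continuous_onI[OF continuous_on_prox_point]])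
  show ?thesis
    unfolding slpmm_step_def Let_def
    by (intro borel_measurable_Pair y borel_measurable_vec_componentwise) (simp, use p l g w y in measurable)
qed

lemma measurable_slpmm_iter:
  assumes "\<And>i. i < k \<Longrightarrow> s i \<in> borel_measurable M"
  shows "(\<lambda>x. slpmm_iter k (\<lambda>i. s i x)) \<in> borel_measurable M"
  using assms by (induction k) (auto intro: measurable_slpmm_step)

lemma measurable_slpmm_multiplier:
  assumes "\<And>i. s i \<in> borel_measurable M"
  shows "(\<lambda>x. snd (slpmm_iter k (\<lambda>i. s i x))) \<in> borel_measurable M"
proof -
  have "(\<lambda>x. slpmm_iter k (\<lambda>i. s i x)) \<in> measurable M (borel \<Otimes>\<^sub>M borel)"
    using measurable_slpmm_iter[of k s] assms by (simp add: borel_prod)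
  then show ?thesis
    by (rule measurable_compose[OF _ measurable_snd])
qed

end

lemma (in prob_space) nn_integral_exp_le_of_nonpos_mean:
  assumes f: "f \<in> borel_measurable M" and bounded: "AE x in M. \<bar>f x\<bar> \<le> c"
    and mean: "expectation f \<le> 0" and "h > 0"
  shows "(\<integral>\<^sup>+ x. ennreal (exp (h * f x)) \<partial>M) \<le> ennreal (exp (h\<^sup>2 * c\<^sup>2 / 2))"
proof -
  interpret interval_bounded_random_variable M f "-c" c
    using f bounded by unfold_locales auto
  have "(\<integral>\<^sup>+ x. ennreal (exp (h * f x)) \<partial>M) \<le> (\<integral>\<^sup>+ x. ennreal (exp (h * (f x - expectation f))) \<partial>M)"
    using mean \<open>h > 0\<close> by (intro nn_integral_mono ennreal_leI) (simp add: mult_nonneg_nonpos algebra_simps)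
  also have "\<dots> \<le> ennreal (exp (h\<^sup>2 * (c - - c)\<^sup>2 / 8))"
    by (rule Hoeffdings_lemma_nn_integral[OF \<open>h > 0\<close>])
  also have "h\<^sup>2 * (c - - c)\<^sup>2 / 8 = h\<^sup>2 * c\<^sup>2 / 2"
    by (simp add: power2_eq_square field_simps)
  finally show ?thesis .
qed

locale bounded_supermartingale_differences =
  fixes \<mu> :: "'b measure" and D :: "nat \<Rightarrow> (nat \<Rightarrow> 'b) \<Rightarrow> real" and c :: real
  assumes prob_space: "prob_space \<mu>"
    and D_meas: "\<And>i. D i \<in> borel_measurable (\<Pi>\<^sub>M j\<in>{..i}. \<mu>)"
    and D_cong: "\<And>i \<eta> \<eta>'. (\<And>j. j \<le> i \<Longrightarrow> \<eta> j = \<eta>' j) \<Longrightarrow> D i \<eta> = D i \<eta>'"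
    and D_bounded: "\<And>i \<eta>. \<eta> \<in> space (\<Pi>\<^sub>M j\<in>{..<i}. \<mu>) \<Longrightarrow> AE y in \<mu>. \<bar>D i (\<eta>(i := y))\<bar> \<le> c"
    and D_mean: "\<And>i \<eta>. \<eta> \<in> space (\<Pi>\<^sub>M j\<in>{..<i}. \<mu>) \<Longrightarrow> (\<integral>y. D i (\<eta>(i := y)) \<partial>\<mu>) \<le> 0"
begin

lemma measurable_D:
  assumes "{..i} \<subseteq> I"
  shows "D i \<in> borel_measurable (\<Pi>\<^sub>M j\<in>I. \<mu>)"
proof -
  have "(\<lambda>\<eta>. D i (restrict \<eta> {..i})) \<in> borel_measurable (\<Pi>\<^sub>M j\<in>I. \<mu>)"
    using assms by (intro measurable_compose[OF measurable_restrict_subset D_meas])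
  moreover have "D i (restrict \<eta> {..i}) = D i \<eta>" for \<eta>
    by (rule D_cong) simp
  ultimately show ?thesis
    by simp
qed

lemma measurable_D_update:
  assumes "\<eta> \<in> space (\<Pi>\<^sub>M j\<in>{..<i}. \<mu>)"
  shows "(\<lambda>y. D i (\<eta>(i := y))) \<in> borel_measurable \<mu>"
proof -
  have "(\<lambda>y. \<eta>(i := y)) \<in> measurable \<mu> (\<Pi>\<^sub>M j\<in>insert i {..<i}. \<mu>)"
    using assms by (intro measurable_component_update) auto
  then show ?thesis
    by (rule measurable_compose) (rule measurable_D, auto)
qed

lemma nn_integral_exp_sum_le:
  assumes "h > 0"
  shows "(\<integral>\<^sup>+ \<eta>. ennreal (exp (h * (\<Sum>i<k. D i \<eta>))) \<partial>(\<Pi>\<^sub>M j\<in>{..<k}. \<mu>))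
    \<le> ennreal (exp (real k * (h\<^sup>2 * c\<^sup>2 / 2)))"
proof (induction k)
  case 0
  interpret P: prob_space "\<Pi>\<^sub>M j\<in>{..<0::nat}. \<mu>"
    by (intro prob_space_PiM prob_space)
  have "(\<Sum>i<0. D i \<eta>) = 0" for \<eta>
    by simp
  then show ?case
    using P.emeasure_space_1 by (simp del: lessThan_0)
next
  case (Suc k)
  interpret \<mu>: prob_space \<mu>
    by (fact prob_space)
  interpret product_sigma_finite "\<lambda>_::nat. \<mu>"
    by unfold_locales
  define E where "E = exp (h\<^sup>2 * c\<^sup>2 / 2)"
  have sum_meas: "(\<lambda>\<eta>. \<Sum>i<n. D i \<eta>) \<in> borel_measurable (\<Pi>\<^sub>M j\<in>I. \<mu>)" if "{..<n} \<subseteq> I" for n I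
    using that by (intro borel_measurable_sum measurable_D) auto
  have "(\<integral>\<^sup>+ \<eta>. ennreal (exp (h * (\<Sum>i<Suc k. D i \<eta>))) \<partial>(\<Pi>\<^sub>M j\<in>{..<Suc k}. \<mu>))
      = (\<integral>\<^sup>+ \<eta>. (\<integral>\<^sup>+ y. ennreal (exp (h * (\<Sum>i<Suc k. D i (\<eta>(k := y))))) \<partial>\<mu>) \<partial>(\<Pi>\<^sub>M j\<in>{..<k}. \<mu>))"
    unfolding lessThan_Suc using sum_meas[of "Suc k" "insert k {..<k}"]
    by (intro product_nn_integral_insert) (auto simp: lessThan_Suc)
  also have "\<dots> \<le> (\<integral>\<^sup>+ \<eta>. ennreal (exp (h * (\<Sum>i<k. D i \<eta>))) * ennreal E \<partial>(\<Pi>\<^sub>M j\<in>{..<k}. \<mu>))"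
  proof (intro nn_integral_mono)
    fix \<eta> assume \<eta>: "\<eta> \<in> space (\<Pi>\<^sub>M j\<in>{..<k}. \<mu>)"
    have "(\<Sum>i<Suc k. D i (\<eta>(k := y))) = (\<Sum>i<k. D i \<eta>) + D k (\<eta>(k := y))" for y
      by (simp add: D_cong[of _ "\<eta>(k := y)" \<eta>])
    then have "(\<integral>\<^sup>+ y. ennreal (exp (h * (\<Sum>i<Suc k. D i (\<eta>(k := y))))) \<partial>\<mu>)
        = ennreal (exp (h * (\<Sum>i<k. D i \<eta>))) * (\<integral>\<^sup>+ y. ennreal (exp (h * D k (\<eta>(k := y)))) \<partial>\<mu>)"
      using measurable_D_update[OF \<eta>]
      by (simp add: distrib_left exp_add ennreal_mult nn_integral_cmult)
    also have "\<dots> \<le> ennreal (exp (h * (\<Sum>i<k. D i \<eta>))) * ennreal E"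
      unfolding E_def using D_bounded[OF \<eta>] D_mean[OF \<eta>] measurable_D_update[OF \<eta>] \<open>h > 0\<close>
      by (intro mult_left_mono \<mu>.nn_integral_exp_le_of_nonpos_mean) auto
    finally show "(\<integral>\<^sup>+ y. ennreal (exp (h * (\<Sum>i<Suc k. D i (\<eta>(k := y))))) \<partial>\<mu>)
        \<le> ennreal (exp (h * (\<Sum>i<k. D i \<eta>))) * ennreal E" .
  qed
  also have "\<dots> = (\<integral>\<^sup>+ \<eta>. ennreal (exp (h * (\<Sum>i<k. D i \<eta>))) \<partial>(\<Pi>\<^sub>M j\<in>{..<k}. \<mu>)) * ennreal E"
    by (intro nn_integral_multc measurable_compose[OF sum_meas[OF subset_refl]]) measurable
  also have "\<dots> \<le> ennreal (exp (real k * (h\<^sup>2 * c\<^sup>2 / 2))) * ennreal E"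
    by (intro mult_right_mono Suc.IH) auto
  also have "\<dots> = ennreal (exp (real (Suc k) * (h\<^sup>2 * c\<^sup>2 / 2)))"
    unfolding E_def by (simp add: ennreal_mult[symmetric] exp_add[symmetric] algebra_simps)
  finally show ?case .
qed

theorem sum_tail_bound:
  assumes "t > 0" "\<gamma> > 0" "c > 0"
  shows "measure (\<Pi>\<^sub>M j\<in>{..<t}. \<mu>) {\<eta> \<in> space (\<Pi>\<^sub>M j\<in>{..<t}. \<mu>). \<gamma> \<le> (\<Sum>i<t. D i \<eta>)}
    \<le> exp (- (\<gamma>\<^sup>2) / (2 * real t * c\<^sup>2))"
proof -
  let ?P = "\<Pi>\<^sub>M j\<in>{..<t}. \<mu>"
  interpret P: prob_space ?P
    by (intro prob_space_PiM prob_space)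
  define h where "h = \<gamma> / (real t * c\<^sup>2)"
  have "h > 0"
    using assms by (simp add: h_def)
  have sum_meas: "(\<lambda>\<eta>. \<Sum>i<t. D i \<eta>) \<in> borel_measurable ?P"
    by (intro borel_measurable_sum measurable_D) auto
  have "emeasure ?P {\<eta> \<in> space ?P. \<gamma> \<le> (\<Sum>i<t. D i \<eta>)}
      \<le> ennreal (exp (- h * \<gamma>)) * (\<integral>\<^sup>+ \<eta>. ennreal (exp (h * (\<Sum>i<t. D i \<eta>))) * indicator (space ?P) \<eta> \<partial>?P)"
    using Chernoff_ineq_nn_integral_ge[OF \<open>h > 0\<close>, of "space ?P" ?P] sum_meas by simp
  also have "(\<integral>\<^sup>+ \<eta>. ennreal (exp (h * (\<Sum>i<t. D i \<eta>))) * indicator (space ?P) \<eta> \<partial>?P)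
      = (\<integral>\<^sup>+ \<eta>. ennreal (exp (h * (\<Sum>i<t. D i \<eta>))) \<partial>?P)"
    by (intro nn_integral_cong) simp
  also have "ennreal (exp (- h * \<gamma>)) * \<dots> \<le> ennreal (exp (- h * \<gamma>)) * ennreal (exp (real t * (h\<^sup>2 * c\<^sup>2 / 2)))"
    by (intro mult_left_mono nn_integral_exp_sum_le \<open>h > 0\<close>) simp
  also have "\<dots> = ennreal (exp (- (\<gamma>\<^sup>2) / (2 * real t * c\<^sup>2)))"
    using assms by (simp add: h_def ennreal_mult[symmetric] exp_add[symmetric] power2_eq_square field_simps)
  finally show ?thesis
    by (simp add: P.emeasure_eq_measure)
qed

end

definition truncated_gain :: "real \<Rightarrow> real \<Rightarrow> real^'p \<Rightarrow> real^'p \<Rightarrow> real" where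
  "truncated_gain c nu_g l g = (if norm l - c / nu_g > 0 then 0 else inner l g)"

lemma abs_truncated_gain_le:
  assumes "c \<ge> 0" "norm g \<le> nu_g"
  shows "\<bar>truncated_gain c nu_g l g\<bar> \<le> c"
proof (cases "norm l - c / nu_g > 0")
  case False
  show ?thesis
  proof (cases "nu_g > 0")
    case True
    have "\<bar>inner l g\<bar> \<le> norm l * norm g"
      by (rule Cauchy_Schwarz_ineq2)
    also have "\<dots> \<le> (c / nu_g) * nu_g"
      using False True assms by (intro mult_mono) auto
    finally show ?thesis
      using False True by (simp add: truncated_gain_def)
  next
    case False
    then have "g = 0"
      using assms(2) by (metis norm_le_zero_iff order_trans not_less)
    then show ?thesis
      using assms(1) by (simp add: truncated_gain_def)
  qed
qed (use assms in \<open>simp add: truncated_gain_def\<close>)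

lemma integral_truncated_gain_nonpos:
  fixes g :: "'b \<Rightarrow> real^'p"
  assumes "\<And>i. 0 \<le> l $ i" "\<And>i. integrable \<mu> (\<lambda>s. g s $ i)" "\<And>i. (\<integral>s. g s $ i \<partial>\<mu>) \<le> 0"
  shows "(\<integral>s. truncated_gain c nu_g l (g s) \<partial>\<mu>) \<le> 0"
proof (cases "norm l - c / nu_g > 0")
  case False
  then have "(\<integral>s. truncated_gain c nu_g l (g s) \<partial>\<mu>) = (\<integral>s. (\<Sum>i\<in>UNIV. l $ i * g s $ i) \<partial>\<mu>)"
    by (simp add: truncated_gain_def inner_vec_def)
  also have "\<dots> = (\<Sum>i\<in>UNIV. l $ i * (\<integral>s. g s $ i \<partial>\<mu>))"
    by (simp add: assms(2))
  also have "\<dots> \<le> 0"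
    using assms(1,3) by (intro sum_nonpos mult_nonneg_nonpos) auto
  finally show ?thesis .
qed (simp add: truncated_gain_def)

lemma (in prob_space) distr_iid_restrict_eq_PiM:
  assumes "\<And>i. random_variable borel (\<xi> i)" "indep_vars (\<lambda>_. borel) \<xi> UNIV"
    and "\<And>i. distr M borel (\<xi> i) = distr M borel (\<xi> 0)" "I \<noteq> {}"
  shows "distr M (\<Pi>\<^sub>M i\<in>I. borel) (\<lambda>\<omega>. \<lambda>i\<in>I. \<xi> i \<omega>) = (\<Pi>\<^sub>M i\<in>I. distr M borel (\<xi> 0))"
proof -
  have "distr M (\<Pi>\<^sub>M i\<in>I. borel) (\<lambda>\<omega>. \<lambda>i\<in>I. \<xi> i \<omega>) = (\<Pi>\<^sub>M i\<in>I. distr M borel (\<xi> i))"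
    using assms(1,4) indep_vars_subset[OF assms(2) subset_UNIV]
    by (subst indep_vars_iff_distr_eq_PiM[symmetric])
  also have "\<dots> = (\<Pi>\<^sub>M i\<in>I. distr M borel (\<xi> 0))"
    using assms(3) by (intro PiM_cong) auto
  finally show ?thesis .
qed

theorem (in prob_space) iid_sum_tail_bound:
  assumes \<xi>: "\<And>i. random_variable borel (\<xi> i)" "indep_vars (\<lambda>_. borel) \<xi> UNIV"
      "\<And>i. distr M borel (\<xi> i) = distr M borel (\<xi> 0)"
    and "bounded_supermartingale_differences (distr M borel (\<xi> 0)) D c"
    and "t > 0" "\<gamma> > 0" "c > 0"
  shows "{\<omega> \<in> space M. \<gamma> \<le> (\<Sum>i<t. D i (\<lambda>j. \<xi> j \<omega>))} \<in> events"
    and "prob {\<omega> \<in> space M. \<gamma> \<le> (\<Sum>i<t. D i (\<lambda>j. \<xi> j \<omega>))} \<le> exp (- (\<gamma>\<^sup>2) / (2 * real t * c\<^sup>2))"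
proof -
  interpret D: bounded_supermartingale_differences "distr M borel (\<xi> 0)" D c
    by fact
  let ?P = "\<Pi>\<^sub>M i\<in>{..<t}. distr M borel (\<xi> 0)"
  define X where "X \<omega> = (\<lambda>i\<in>{..<t}. \<xi> i \<omega>)" for \<omega>
  define B where "B = {\<eta> \<in> space ?P. \<gamma> \<le> (\<Sum>i<t. D i \<eta>)}"
  have sets_P: "sets ?P = sets (\<Pi>\<^sub>M i\<in>{..<t}. borel)"
    by (intro sets_PiM_cong) auto
  have X: "X \<in> measurable M (\<Pi>\<^sub>M i\<in>{..<t}. borel)"
    unfolding X_def using \<xi>(1) by measurable
  have "(\<lambda>\<eta>. \<Sum>i<t. D i \<eta>) \<in> borel_measurable ?P"
    by (intro borel_measurable_sum D.measurable_D) auto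
  then have "B \<in> sets ?P"
    unfolding B_def by measurable
  then have B: "B \<in> sets (\<Pi>\<^sub>M i\<in>{..<t}. borel)"
    using sets_P by simp
  have "(\<Sum>i<t. D i (X \<omega>)) = (\<Sum>i<t. D i (\<lambda>j. \<xi> j \<omega>))" for \<omega>
    by (intro sum.cong refl D.D_cong) (auto simp: X_def)
  moreover have "X \<omega> \<in> space ?P" if "\<omega> \<in> space M" for \<omega>
    using measurable_space[OF X that] sets_eq_imp_space_eq[OF sets_P] by simp
  ultimately have event: "{\<omega> \<in> space M. \<gamma> \<le> (\<Sum>i<t. D i (\<lambda>j. \<xi> j \<omega>))} = X -` B \<inter> space M"
    by (auto simp: B_def)
  then show "{\<omega> \<in> space M. \<gamma> \<le> (\<Sum>i<t. D i (\<lambda>j. \<xi> j \<omega>))} \<in> events"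
    using measurable_sets[OF X B] by simp
  have "prob (X -` B \<inter> space M) = measure (distr M (\<Pi>\<^sub>M i\<in>{..<t}. borel) X) B"
    by (rule measure_distr[OF X B, symmetric])
  also have "distr M (\<Pi>\<^sub>M i\<in>{..<t}. borel) X = ?P"
    unfolding X_def using \<xi> \<open>t > 0\<close> by (intro distr_iid_restrict_eq_PiM) auto
  also have "measure ?P B \<le> exp (- (\<gamma>\<^sup>2) / (2 * real t * c\<^sup>2))"
    unfolding B_def using assms(5-7) by (rule D.sum_tail_bound)
  finally show "prob {\<omega> \<in> space M. \<gamma> \<le> (\<Sum>i<t. D i (\<lambda>j. \<xi> j \<omega>))} \<le> exp (- (\<gamma>\<^sup>2) / (2 * real t * c\<^sup>2))"
    unfolding event .
qed

lemma (in finite_measure) measure_le_union_bound: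
  fixes n :: nat
  assumes "A \<subseteq> B \<union> (\<Union>j<n. Y j)" "B \<in> sets M" "\<And>j. j < n \<Longrightarrow> Y j \<in> sets M"
  shows "measure M A \<le> measure M B + (\<Sum>j<n. measure M (Y j))"
proof -
  have "measure M A \<le> measure M (B \<union> (\<Union>j<n. Y j))"
    using assms by (intro finite_measure_mono sets.Un sets.finite_UN) auto
  also have "\<dots> \<le> measure M B + measure M (\<Union>j<n. Y j)"
    using assms by (intro measure_Un_le) auto
  also have "measure M (\<Union>j<n. Y j) \<le> (\<Sum>j<n. measure M (Y j))"
    using assms by (intro finite_measure_subadditive_finite) auto
  finally show ?thesis
    by simp
qed

lemma (in slpmm) truncated_gains_bounded_supermartingale_differences:
  assumes "prob_space M" and \<xi>0: "\<xi>0 \<in> borel_measurable M"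
    and "AE \<omega> in M. norm (G z (\<xi>0 \<omega>)) \<le> nu_g"
    and "\<And>i. integrable M (\<lambda>\<omega>. G z (\<xi>0 \<omega>) $ i)" "\<And>i. (\<integral>\<omega>. G z (\<xi>0 \<omega>) $ i \<partial>M) \<le> 0"
    and "c > 0"
  shows "bounded_supermartingale_differences (distr M borel \<xi>0)
           (\<lambda>i \<eta>. truncated_gain c nu_g (snd (slpmm_iter i \<eta>)) (G z (\<eta> i))) c"
proof (rule bounded_supermartingale_differences.intro)
  let ?\<mu> = "distr M borel \<xi>0"
  have Gz: "G z \<in> borel_measurable borel"
    using borel_measurable_uncurried_compose[OF G_meas, of "\<lambda>_. z" borel "\<lambda>s. s"] by simp
  have Gzi: "(\<lambda>s. G z s $ i) \<in> borel_measurable borel" for i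
    using Gz by measurable
  show "prob_space ?\<mu>"
    using assms(1) \<xi>0 by (rule prob_space.prob_space_distr)
  fix i :: nat
  have "(\<lambda>\<eta>. \<eta> j) \<in> borel_measurable (\<Pi>\<^sub>M j\<in>{..i}. ?\<mu>)" if "j \<le> i" for j
    using measurable_component_singleton[of j "{..i}" "\<lambda>_. ?\<mu>"] that
    by (simp add: measurable_cong_sets[OF refl sets_distr])
  then have "slpmm_iter i \<in> measurable (\<Pi>\<^sub>M j\<in>{..i}. ?\<mu>) (borel \<Otimes>\<^sub>M borel)"
    and sample: "(\<lambda>\<eta>. \<eta> i) \<in> borel_measurable (\<Pi>\<^sub>M j\<in>{..i}. ?\<mu>)"
    using measurable_slpmm_iter[of i "\<lambda>j \<eta>. \<eta> j"] by (auto simp: borel_prod)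
  then have "(\<lambda>\<eta>. snd (slpmm_iter i \<eta>)) \<in> borel_measurable (\<Pi>\<^sub>M j\<in>{..i}. ?\<mu>)"
    and "(\<lambda>\<eta>. G z (\<eta> i)) \<in> borel_measurable (\<Pi>\<^sub>M j\<in>{..i}. ?\<mu>)"
    by (auto intro: measurable_compose[OF _ measurable_snd] measurable_compose[OF sample Gz])
  then show "(\<lambda>\<eta>. truncated_gain c nu_g (snd (slpmm_iter i \<eta>)) (G z (\<eta> i))) \<in> borel_measurable (\<Pi>\<^sub>M j\<in>{..i}. ?\<mu>)"
    unfolding truncated_gain_def by measurable
  fix \<eta> :: "nat \<Rightarrow> 'b"
  show "truncated_gain c nu_g (snd (slpmm_iter i \<eta>)) (G z (\<eta> i)) = truncated_gain c nu_g (snd (slpmm_iter i \<eta>')) (G z (\<eta>' i))"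
    if "\<And>j. j \<le> i \<Longrightarrow> \<eta> j = \<eta>' j" for \<eta>'
    using that slpmm_iter_cong[of i \<eta> \<eta>'] by simp
  have iter_upd: "slpmm_iter i (\<eta>(i := y)) = slpmm_iter i \<eta>" for y
    by (rule slpmm_iter_cong) simp
  show "AE y in ?\<mu>. \<bar>truncated_gain c nu_g (snd (slpmm_iter i (\<eta>(i := y)))) (G z ((\<eta>(i := y)) i))\<bar> \<le> c"
  proof -
    have "AE y in ?\<mu>. norm (G z y) \<le> nu_g"
      using assms(3) by (subst AE_distr_iff[OF \<xi>0]) (use Gz in measurable)
    then show ?thesis
      by eventually_elim (use assms(6) in \<open>simp add: iter_upd abs_truncated_gain_le\<close>)
  qed
  have "(\<integral>y. truncated_gain c nu_g (snd (slpmm_iter i \<eta>)) (G z y) \<partial>?\<mu>) \<le> 0"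
    using assms(4,5) \<xi>0 Gzi
    by (intro integral_truncated_gain_nonpos slpmm_iter_multiplier_nonneg)
       (simp_all add: integrable_distr_eq integral_distr)
  then show "(\<integral>y. truncated_gain c nu_g (snd (slpmm_iter i (\<eta>(i := y)))) (G z ((\<eta>(i := y)) i)) \<partial>?\<mu>) \<le> 0"
    by (simp add: iter_upd)
qed

theorem lemma10:
  fixes M :: "'w measure"
    and C :: "'a::euclidean_space set"
    and Xi :: "'b::euclidean_space set"
    and \<xi> :: "nat \<Rightarrow> 'w \<Rightarrow> 'b"
    and F :: "'a \<Rightarrow> 'b \<Rightarrow> real"
    and G :: "'a \<Rightarrow> 'b \<Rightarrow> real^'p"
    and v0 :: "'a \<Rightarrow> 'b \<Rightarrow> 'a"
    and v :: "'p \<Rightarrow> 'a \<Rightarrow> 'b \<Rightarrow> 'a"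
    and x :: "nat \<Rightarrow> 'w \<Rightarrow> 'a"
    and lam :: "nat \<Rightarrow> 'w \<Rightarrow> real^'p"
    and \<sigma> \<alpha> R nu_g kappa_f kappa_g c :: real
    and x0 z :: 'a
  assumes M: "prob_space M"
    \<comment> \<open>C nonempty compact convex\<close>
    and C: "C \<noteq> {}" "compact C" "convex C"
    \<comment> \<open>xi^0, xi^1, ... i.i.d. random vectors, supported on Xi\<close>
    and xi_meas: "\<And>k. \<xi> k \<in> borel_measurable M"
    and xi_indep: "prob_space.indep_vars M (\<lambda>_. borel) \<xi> UNIV"
    and xi_ident: "\<And>k. distr M borel (\<xi> k) = distr M borel (\<xi> 0)"
    and xi_supp: "\<And>k. AE \<omega> in M. \<xi> k \<omega> \<in> Xi"
    \<comment> \<open>measurability of the data (tacit in the paper)\<close>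
    and F_meas: "(\<lambda>p. F (fst p) (snd p)) \<in> borel_measurable borel"
    and G_meas: "(\<lambda>p. G (fst p) (snd p)) \<in> borel_measurable borel"
    and v0_meas: "(\<lambda>p. v0 (fst p) (snd p)) \<in> borel_measurable borel"
    and v_meas: "\<And>i. (\<lambda>p. v i (fst p) (snd p)) \<in> borel_measurable borel"
    \<comment> \<open>convexity and continuity in x\<close>
    and F_cvx: "\<And>s. s \<in> Xi \<Longrightarrow> convex_on C (\<lambda>y. F y s) \<and> continuous_on C (\<lambda>y. F y s)"
    and G_cvx: "\<And>s i. s \<in> Xi \<Longrightarrow> convex_on C (\<lambda>y. G y s $ i) \<and> continuous_on C (\<lambda>y. G y s $ i)"
    \<comment> \<open>f and g_i finite on C\<close>
    and f_fin: "\<And>y. y \<in> C \<Longrightarrow> integrable M (\<lambda>\<omega>. F y (\<xi> 0 \<omega>))"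
    and g_fin: "\<And>y i. y \<in> C \<Longrightarrow> integrable M (\<lambda>\<omega>. G y (\<xi> 0 \<omega>) $ i)"
    \<comment> \<open>stochastic subgradients\<close>
    and v0_sub: "\<And>y s. y \<in> C \<Longrightarrow> s \<in> Xi \<Longrightarrow> subgrad_on C (\<lambda>u. F u s) y (v0 y s)"
    and v_sub: "\<And>i y s. y \<in> C \<Longrightarrow> s \<in> Xi \<Longrightarrow> subgrad_on C (\<lambda>u. G u s $ i) y (v i y s)"
    \<comment> \<open>(A1)--(A3)\<close>
    and A1: "\<And>y y'. y \<in> C \<Longrightarrow> y' \<in> C \<Longrightarrow> norm (y - y') \<le> R"
    and A2: "\<And>y s. y \<in> C \<Longrightarrow> s \<in> Xi \<Longrightarrow> norm (G y s) \<le> nu_g"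
    and A3: "\<And>y s. y \<in> C \<Longrightarrow> s \<in> Xi \<Longrightarrow> norm (v0 y s) \<le> kappa_f"
            "\<And>i y s. y \<in> C \<Longrightarrow> s \<in> Xi \<Longrightarrow> norm (v i y s) \<le> kappa_g"
    \<comment> \<open>SLPMM with parameters sigma, alpha > 0\<close>
    and params: "\<sigma> > 0" "\<alpha> > 0"
    and x0: "x0 \<in> C"
    and init: "\<And>\<omega>. \<omega> \<in> space M \<Longrightarrow> x 0 \<omega> = x0 \<and> lam 0 \<omega> = 0"
    and x_step: "\<And>k \<omega>. \<omega> \<in> space M \<Longrightarrow>
       is_arg_min (\<lambda>y. slpmm_L F G v0 v \<sigma> (x k \<omega>) (\<xi> k \<omega>) y (lam k \<omega>)
                        + (\<alpha> / 2) * (norm (y - x k \<omega>))\<^sup>2)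
                  (\<lambda>y. y \<in> C) (x (Suc k) \<omega>)"
    and lam_step: "\<And>k \<omega>. \<omega> \<in> space M \<Longrightarrow>
       lam (Suc k) \<omega> = (\<chi> i. max (lam k \<omega> $ i + \<sigma> * (G (x k \<omega>) (\<xi> k \<omega>) $ i
                                + inner (v i (x k \<omega>) (\<xi> k \<omega>)) (x (Suc k) \<omega> - x k \<omega>))) 0)"
    \<comment> \<open>z is feasible: z in Phi\<close>
    and z: "z \<in> C" "\<And>i. integral\<^sup>L M (\<lambda>\<omega>. G z (\<xi> 0 \<omega>) $ i) \<le> 0"
    and c: "c > 0"
  shows "\<forall>\<gamma>>0. \<forall>t\<ge>1.
           measure M {\<omega> \<in> space M. (\<Sum>k<t. inner (lam k \<omega>) (G z (\<xi> k \<omega>))) \<ge> \<gamma>}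
           \<le> exp (- (\<gamma>\<^sup>2) / (2 * real t * c\<^sup>2))
             + (\<Sum>j<t. measure M {\<omega> \<in> space M. norm (lam j \<omega>) - c / nu_g > 0})"
proof (intro allI impI)
  fix \<gamma> :: real and t :: nat
  assume "\<gamma> > 0" "t \<ge> 1"
  let ?Z = "{\<omega> \<in> space M. (\<Sum>k<t. inner (lam k \<omega>) (G z (\<xi> k \<omega>))) \<ge> \<gamma>}"
  let ?Y = "\<lambda>j. {\<omega> \<in> space M. norm (lam j \<omega>) - c / nu_g > 0}"
  interpret M: prob_space M
    by (fact M)
  interpret S: slpmm \<sigma> \<alpha> C G v0 v x0
    using params C G_meas v0_meas v_meas by unfold_locales auto
  define D where "D i \<eta> = truncated_gain c nu_g (snd (S.slpmm_iter i \<eta>)) (G z (\<eta> i))" for i \<eta>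
  let ?T = "{\<omega> \<in> space M. \<gamma> \<le> (\<Sum>i<t. D i (\<lambda>j. \<xi> j \<omega>))}"
  have "AE \<omega> in M. norm (G z (\<xi> 0 \<omega>)) \<le> nu_g"
    using xi_supp[of 0] by eventually_elim (use A2 z(1) in auto)
  then have increments: "bounded_supermartingale_differences (distr M borel (\<xi> 0)) D c"
    unfolding D_def using M xi_meas g_fin[OF z(1)] z(2) c
    by (intro S.truncated_gains_bounded_supermartingale_differences)
  have "t > 0"
    using \<open>t \<ge> 1\<close> by simp
  note tail = M.iid_sum_tail_bound[OF xi_meas xi_indep xi_ident increments \<open>t > 0\<close> \<open>\<gamma> > 0\<close> c]
  have lam: "lam k \<omega> = snd (S.slpmm_iter k (\<lambda>i. \<xi> i \<omega>))" if "\<omega> \<in> space M" for k \<omega>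
    using S.slpmm_iter_eq[where F=F and xs="\<lambda>k. x k \<omega>" and ls="\<lambda>k. lam k \<omega>" and s="\<lambda>i. \<xi> i \<omega>"]
      init[OF that] x_step[OF that] lam_step[OF that] by simp
  have "lam j \<in> borel_measurable M" for j
    by (subst measurable_cong[OF lam]) (auto intro: S.measurable_slpmm_multiplier xi_meas)
  then have "?Y j \<in> sets M" for j
    by measurable
  moreover have "?Z \<subseteq> ?T \<union> (\<Union>j<t. ?Y j)"
    by (auto simp: D_def truncated_gain_def lam[symmetric])
  ultimately have "measure M ?Z \<le> measure M ?T + (\<Sum>j<t. measure M (?Y j))"
    using tail(1) by (intro M.measure_le_union_bound) auto
  with tail(2) show "measure M ?Z \<le> exp (- (\<gamma>\<^sup>2) / (2 * real t * c\<^sup>2)) + (\<Sum>j<t. measure M (?Y j))"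
    by linarith
qed

end
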